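(* Consider a rigid body in the director formulation with mass $m>0$ and constants $E_1,E_2,E_3>0$, configuration $(\boldsymbol{\varphi},\mathbf{d}_1,\mathbf{d}_2,\mathbf{d}_3)\in(\mathbb{R}^3)^4$ and velocities $(\mathbf{v}_{\boldsymbol{\varphi}},\mathbf{v}_{\mathbf{d}_1},\mathbf{v}_{\mathbf{d}_2},\mathbf{v}_{\mathbf{d}_3})$. Let $V\in\mathcal{C}^1(\mathbb{R}^3,\mathbb{R})$ be a potential depending only on $\boldsymbol{\varphi}$. Let the internal constraint be $$\mathbf{g}_d(\mathbf{d}_1,\mathbf{d}_2,\mathbf{d}_3)=\Big(\tfrac12(\mathbf{d}_1^\top\mathbf{d}_1-1),\tfrac12(\mathbf{d}_2^\top\mathbf{d}_2-1),\tfrac12(\mathbf{d}_3^\top\mathbf{d}_3-1),\mathbf{d}_1^\top\mathbf{d}_2,\mathbf{d}_1^\top\mathbf{d}_3,\mathbf{d}_2^\top\mathbf{d}_3\Big)\in\mathbb{R}^6,$$ and for $\boldsymbol{\lambda}=(\lambda_1,\dots,\lambda_6)\in\mathbb{R}^6$ let $\mathbf{f}^{c}_i(\mathbf{d},\boldsymbol{\lambda})\in\mathbb{R}^3$ denote the block of $\nabla\mathbf{g}_d(\mathbf{d}_1,\mathbf{d}_2,\mathbf{d}_3)^\top\boldsymbol{\lambda}$ corresponding to $\mathbf{d}_i$, i.e. $\mathbf{f}^c_1=\lambda_1\mathbf{d}_1+\lambda_4\mathbf{d}_2+\lambda_5\mathbf{d}_3$, $\mathbf{f}^c_2=\lambda_2\mathbf{d}_2+\lambda_4\mathbf{d}_1+\lambda_6\mathbf{d}_3$,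 $\mathbf{f}^c_3=\lambda_3\mathbf{d}_3+\lambda_5\mathbf{d}_1+\lambda_6\mathbf{d}_2$. Define the total angular momentum $$\mathbf{L}=\boldsymbol{\varphi}\times m\,\mathbf{v}_{\boldsymbol{\varphi}}+\sum_{i=1}^3\mathbf{d}_i\times E_i\,\mathbf{v}_{\mathbf{d}_i}.$$ Let $h>0$ and suppose states at steps $n$ and $n+1$, a multiplier $\boldsymbol{\lambda}^{n+1/2}\in\mathbb{R}^6$ and given generalized forces $\mathbf{f}_{\boldsymbol{\varphi}}^{n+1/2},\mathbf{f}_{\mathbf{d}_i}^{n+1/2}\in\mathbb{R}^3$ satisfy, with $\square^{n+1/2}:=\frac12(\square^{n+1}+\square^n)$, $$\boldsymbol{\varphi}^{n+1}-\boldsymbol{\varphi}^n=h\,\mathbf{v}_{\boldsymbol{\varphi}}^{n+1/2},\qquad \mathbf{d}_i^{n+1}-\mathbf{d}_i^n=h\,\mathbf{v}_{\mathbf{d}_i}^{n+1/2}\ (i=1,2,3),$$ $$m(\mathbf{v}_{\boldsymbol{\varphi}}^{n+1}-\mathbf{v}_{\boldsymbol{\varphi}}^n)=-h\,\nabla V(\boldsymbol{\varphi}^{n+1/2})+h\,\mathbf{f}_{\boldsymbol{\varphi}}^{n+1/2},$$ $$E_i(\mathbf{v}_{\mathbf{d}_i}^{n+1}-\mathbf{v}_{\mathbf{d}_i}^n)=-h\,\mathbf{f}^c_i(\mathbf{d}^{n+1/2},\boldsymbol{\lambda}^{n+1/2})+h\,\mathbf{f}_{\mathbf{d}_i}^{n+1/2}\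 (i=1,2,3),$$ $$\nabla\mathbf{g}_d(\mathbf{d}_1^{n+1/2},\mathbf{d}_2^{n+1/2},\mathbf{d}_3^{n+1/2})\,(\mathbf{v}_{\mathbf{d}_1}^{n+1/2},\mathbf{v}_{\mathbf{d}_2}^{n+1/2},\mathbf{v}_{\mathbf{d}_3}^{n+1/2})=\mathbf{0}.$$ Then, with $\mathbf{L}^k$ the angular momentum evaluated at the step-$k$ state, $$\mathbf{L}^{n+1}-\mathbf{L}^n=-h\Big[\boldsymbol{\varphi}^{n+1/2}\times\nabla V(\boldsymbol{\varphi}^{n+1/2})-\boldsymbol{\varphi}^{n+1/2}\times\mathbf{f}_{\boldsymbol{\varphi}}^{n+1/2}-\sum_{i=1}^3\mathbf{d}_i^{n+1/2}\times\mathbf{f}_{\mathbf{d}_i}^{n+1/2}\Big].$$ In particular, if $\nabla V\equiv\mathbf{0}$ and all external generalized forces vanish, then $\mathbf{L}^{n+1}=\mathbf{L}^n$.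
   Context: $\times$ denotes the cross product in $\mathbb{R}^3$. In the director formulation, $\boldsymbol{\varphi}$ is the center-of-mass position and the directors $\mathbf{d}_i$ are the columns of the rotation matrix; $E_i$ are the principal values of the convected Euler tensor, so the kinetic energy is $\frac12 m|\mathbf{v}_{\boldsymbol{\varphi}}|^2+\frac12\sum_i E_i|\mathbf{v}_{\mathbf{d}_i}|^2$. *)

theory Defs
  imports "HOL-Analysis.Analysis" "HOL-Analysis.Cross3"
begin

unbundle cross3_syntax

definition gd :: "real^3 \<Rightarrow> real^3 \<Rightarrow> real^3 \<Rightarrow> real^6" where
  "gd d1 d2 d3 = vector [ (1/2) * (d1 \<bullet> d1 - 1), (1/2) * (d2 \<bullet> d2 - 1), (1/2) * (d3 \<bullet> d3 - 1),
                          d1 \<bullet> d2, d1 \<bullet> d3, d2 \<bullet> d3 ]"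

text \<open>Jacobian of gd at (d1,d2,d3) applied to the velocity (v1,v2,v3).\<close>
definition grad_gd :: "real^3 \<Rightarrow> real^3 \<Rightarrow> real^3 \<Rightarrow> real^3 \<Rightarrow> real^3 \<Rightarrow> real^3 \<Rightarrow> real^6" where
  "grad_gd d1 d2 d3 v1 v2 v3 = vector [ d1 \<bullet> v1, d2 \<bullet> v2, d3 \<bullet> v3,
                          d2 \<bullet> v1 + d1 \<bullet> v2, d3 \<bullet> v1 + d1 \<bullet> v3, d3 \<bullet> v2 + d2 \<bullet> v3 ]"

text \<open>Blocks of (nabla gd)^T lambda corresponding to d1, d2, d3.\<close>
definition fc1 :: "real^3 \<Rightarrow> real^3 \<Rightarrow> real^3 \<Rightarrow> real^6 \<Rightarrow> real^3" where
  "fc1 d1 d2 d3 l = (l$1) *\<^sub>R d1 + (l$4) *\<^sub>R d2 + (l$5) *\<^sub>R d3"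
definition fc2 :: "real^3 \<Rightarrow> real^3 \<Rightarrow> real^3 \<Rightarrow> real^6 \<Rightarrow> real^3" where
  "fc2 d1 d2 d3 l = (l$2) *\<^sub>R d2 + (l$4) *\<^sub>R d1 + (l$6) *\<^sub>R d3"
definition fc3 :: "real^3 \<Rightarrow> real^3 \<Rightarrow> real^3 \<Rightarrow> real^6 \<Rightarrow> real^3" where
  "fc3 d1 d2 d3 l = (l$3) *\<^sub>R d3 + (l$5) *\<^sub>R d1 + (l$6) *\<^sub>R d2"

definition ang_mom :: "real \<Rightarrow> real \<Rightarrow> real \<Rightarrow> real \<Rightarrow> real^3 \<Rightarrow> real^3 \<Rightarrow> real^3 \<Rightarrow> real^3
    \<Rightarrow> real^3 \<Rightarrow> real^3 \<Rightarrow> real^3 \<Rightarrow> real^3 \<Rightarrow> real^3" where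
  "ang_mom m E1 E2 E3 phi d1 d2 d3 vphi vd1 vd2 vd3 =
     phi \<times> (m *\<^sub>R vphi) + d1 \<times> (E1 *\<^sub>R vd1) + d2 \<times> (E2 *\<^sub>R vd2) + d3 \<times> (E3 *\<^sub>R vd3)"

end

theory Submission
  imports Defs
begin

(* For each pair (d, v) among (phi, vphi) and (d_i, vd_i), the difference d' \<times> v' - d \<times> v
   splits into (midpoint of d) \<times> (v' - v) plus (1/2) (d' - d) \<times> (v' + v), and the last
   term vanishes because the position update makes d' - d parallel to v' + v.  Hence each
   contribution to L changes by the torque of the midpoint force.  The constraint forces are
   torque-free for any multiplier: lambda_4, lambda_5, lambda_6 each couple a pair d_i, d_j
   symmetrically and d_i \<times> d_j + d_j \<times> d_i = 0, while lambda_1..3 multiply d_i \<times> d_i = 0. *)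

lemma cross_diff_midpoint:
  fixes d d' v v' :: "real^3"
  shows "d' \<times> v' - d \<times> v = ((1/2) *\<^sub>R (d' + d)) \<times> (v' - v) + (1/2) *\<^sub>R ((d' - d) \<times> (v' + v))"
  by (simp add: cross_add_left cross_add_right cross_mult_left cross_mult_right
      Cross3.left_diff_distrib Cross3.right_diff_distrib scaleR_add_right scaleR_diff_right)

lemma cross_diff_midpoint_step:
  fixes d d' v v' F :: "real^3" and E h :: real
  assumes pos: "d' - d = h *\<^sub>R ((1/2) *\<^sub>R (v' + v))" and mom: "E *\<^sub>R (v' - v) = F"
  shows "d' \<times> (E *\<^sub>R v') - d \<times> (E *\<^sub>R v) = ((1/2) *\<^sub>R (d' + d)) \<times> F"
proof -
  have "(d' - d) \<times> (v' + v) = 0"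
    unfolding pos by (simp add: cross_mult_left)
  then have "d' \<times> v' - d \<times> v = ((1/2) *\<^sub>R (d' + d)) \<times> (v' - v)"
    by (simp add: cross_diff_midpoint)
  then show ?thesis
    unfolding mom[symmetric] by (simp add: cross_mult_right flip: scaleR_diff_right)
qed

lemma constraint_forces_torque_free:
  "d1 \<times> fc1 d1 d2 d3 l + d2 \<times> fc2 d1 d2 d3 l + d3 \<times> fc3 d1 d2 d3 l = 0"
  unfolding fc1_def fc2_def fc3_def
  by (simp add: cross_add_right cross_mult_right cross_skew[of d2 d1] cross_skew[of d3 d1] cross_skew[of d3 d2])

lemma ang_mom_diff:
  "ang_mom m E1 E2 E3 phi' d1' d2' d3' vphi' vd1' vd2' vd3' - ang_mom m E1 E2 E3 phi d1 d2 d3 vphi vd1 vd2 vd3 =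
     (phi' \<times> (m *\<^sub>R vphi') - phi \<times> (m *\<^sub>R vphi)) + (d1' \<times> (E1 *\<^sub>R vd1') - d1 \<times> (E1 *\<^sub>R vd1))
     + (d2' \<times> (E2 *\<^sub>R vd2') - d2 \<times> (E2 *\<^sub>R vd2)) + (d3' \<times> (E3 *\<^sub>R vd3') - d3 \<times> (E3 *\<^sub>R vd3))"
  unfolding ang_mom_def by (simp add: algebra_simps)

theorem mainTheorem4:
  fixes m E1 E2 E3 h :: real
    and V :: "real^3 \<Rightarrow> real" and gradV :: "real^3 \<Rightarrow> real^3"
    and phi d1 d2 d3 vphi vd1 vd2 vd3 :: "real^3"
    and phi' d1' d2' d3' vphi' vd1' vd2' vd3' :: "real^3"
    and lam :: "real^6"
    and fphi fd1 fd2 fd3 :: "real^3"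
  assumes m_pos: "m > 0" and E_pos: "E1 > 0" "E2 > 0" "E3 > 0" and h_pos: "h > 0"
    and V_grad: "\<And>x. (V has_derivative (\<lambda>u. gradV x \<bullet> u)) (at x)"
    and V_C1: "continuous_on UNIV gradV"
    and pos_phi: "phi' - phi = h *\<^sub>R ((1/2) *\<^sub>R (vphi' + vphi))"
    and pos_d1: "d1' - d1 = h *\<^sub>R ((1/2) *\<^sub>R (vd1' + vd1))"
    and pos_d2: "d2' - d2 = h *\<^sub>R ((1/2) *\<^sub>R (vd2' + vd2))"
    and pos_d3: "d3' - d3 = h *\<^sub>R ((1/2) *\<^sub>R (vd3' + vd3))"
    and mom_phi: "m *\<^sub>R (vphi' - vphi) = - (h *\<^sub>R gradV ((1/2) *\<^sub>R (phi' + phi))) + h *\<^sub>R fphi"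
    and mom_d1: "E1 *\<^sub>R (vd1' - vd1) =
       - (h *\<^sub>R fc1 ((1/2) *\<^sub>R (d1' + d1)) ((1/2) *\<^sub>R (d2' + d2)) ((1/2) *\<^sub>R (d3' + d3)) lam) + h *\<^sub>R fd1"
    and mom_d2: "E2 *\<^sub>R (vd2' - vd2) =
       - (h *\<^sub>R fc2 ((1/2) *\<^sub>R (d1' + d1)) ((1/2) *\<^sub>R (d2' + d2)) ((1/2) *\<^sub>R (d3' + d3)) lam) + h *\<^sub>R fd2"
    and mom_d3: "E3 *\<^sub>R (vd3' - vd3) =
       - (h *\<^sub>R fc3 ((1/2) *\<^sub>R (d1' + d1)) ((1/2) *\<^sub>R (d2' + d2)) ((1/2) *\<^sub>R (d3' + d3)) lam) + h *\<^sub>R fd3"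
    and constr: "grad_gd ((1/2) *\<^sub>R (d1' + d1)) ((1/2) *\<^sub>R (d2' + d2)) ((1/2) *\<^sub>R (d3' + d3))
                   ((1/2) *\<^sub>R (vd1' + vd1)) ((1/2) *\<^sub>R (vd2' + vd2)) ((1/2) *\<^sub>R (vd3' + vd3)) = 0"
  shows "ang_mom m E1 E2 E3 phi' d1' d2' d3' vphi' vd1' vd2' vd3'
           - ang_mom m E1 E2 E3 phi d1 d2 d3 vphi vd1 vd2 vd3 =
         - (h *\<^sub>R ( ((1/2) *\<^sub>R (phi' + phi)) \<times> gradV ((1/2) *\<^sub>R (phi' + phi))
                    - ((1/2) *\<^sub>R (phi' + phi)) \<times> fphi
                    - ( ((1/2) *\<^sub>R (d1' + d1)) \<times> fd1 + ((1/2) *\<^sub>R (d2' + d2)) \<times> fd2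
                        + ((1/2) *\<^sub>R (d3' + d3)) \<times> fd3 )))
         \<and> ((\<forall>x. gradV x = 0) \<and> fphi = 0 \<and> fd1 = 0 \<and> fd2 = 0 \<and> fd3 = 0 \<longrightarrow>
            ang_mom m E1 E2 E3 phi' d1' d2' d3' vphi' vd1' vd2' vd3'
              = ang_mom m E1 E2 E3 phi d1 d2 d3 vphi vd1 vd2 vd3)"
proof -
  let ?mid = "\<lambda>a b :: real^3. (1/2) *\<^sub>R (a + b)"
  let ?c1 = "fc1 (?mid d1' d1) (?mid d2' d2) (?mid d3' d3) lam"
  let ?c2 = "fc2 (?mid d1' d1) (?mid d2' d2) (?mid d3' d3) lam"
  let ?c3 = "fc3 (?mid d1' d1) (?mid d2' d2) (?mid d3' d3) lam"
  have torque_free: "h *\<^sub>R (?mid d1' d1 \<times> ?c1 + ?mid d2' d2 \<times> ?c2 + ?mid d3' d3 \<times> ?c3) = 0"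
    by (simp add: constraint_forces_torque_free)
  have balance: "ang_mom m E1 E2 E3 phi' d1' d2' d3' vphi' vd1' vd2' vd3'
           - ang_mom m E1 E2 E3 phi d1 d2 d3 vphi vd1 vd2 vd3 =
         - (h *\<^sub>R (?mid phi' phi \<times> gradV (?mid phi' phi) - ?mid phi' phi \<times> fphi
                    - (?mid d1' d1 \<times> fd1 + ?mid d2' d2 \<times> fd2 + ?mid d3' d3 \<times> fd3)))"
    unfolding ang_mom_diff
      cross_diff_midpoint_step[OF pos_phi mom_phi] cross_diff_midpoint_step[OF pos_d1 mom_d1]
      cross_diff_midpoint_step[OF pos_d2 mom_d2] cross_diff_midpoint_step[OF pos_d3 mom_d3]
    using torque_free
    by (simp only: cross_add_right cross_minus_right cross_mult_right
        scaleR_add_right scaleR_diff_right scaleR_minus_right) (simp add: algebra_simps)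
  then show ?thesis
    by auto
qed

end
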